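(* For every trie $\mathcal T$ with $n$ nodes and every integer $k\ge0$, $n\mathcal H_k(\mathcal T)\le (n-1)\mathcal H^{label}_k(\mathcal T)+1.443n$.
   Context: A trie over a finite totally ordered alphabet $\Sigma$ is a rooted ordered tree with edges labeled by symbols of $\Sigma$ such that edges leaving the same node have distinct labels and siblings are ordered by their incoming labels. For node $u$: $out(u)$ is the set of labels of edges leaving $u$; $\lambda(u)$ is the label of the edge entering $u$, with $\lambda(\text{root})=\#\notin\Sigma$; $\pi(u)$ is the parent, $\pi(\text{root})=\text{root}$; $\lambda_0(u)=\epsilon$, $\lambda_k(u)=\lambda_{k-1}(\pi(u))\cdot\lambda(u)$. For a length-$k$ string $w$ and $c\in\Sigma$: $n_w=|\{u:\lambda_k(u)=w\}|$, $n_{w,c}=|\{u:\lambda_k(u)=w,\ c\in out(u)\}|$. Logs base 2, $0\log(x/0)=0$. $\mathcal H_k(\mathcal T)=\sum_{w}\sum_{c\in\Sigma}\left[\frac{n_{w,c}}{n}\log\frac{n_w}{n_{w,c}}+\frac{n_w-n_{w,c}}{n}\log\frac{n_w}{n_w-n_{w,c}}\right]$ over contexts $w$ with $n_w>0$. For a string $X$ of length $\ell>0$ with $\ell_c$ occurrences of $c$, $\mathcal H_0(X)=\sum_c\frac{\ell_c}{\ell}\log\frac{\ell}{\ell_c}$ (and $0$ for the empty string). For a length-$k$ context $w$, $cover(w)$ is the string obtained by concatenating (in any order) the labels of all edges leaving nodes $u$ with $\lambda_k(u)=w$. The label entropy is defined by $(n-1)\mathcal H^{label}_k(\mathcal T)=\sum_w|cover(w)|\,\mathcal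 H_0(cover(w))$. *)

theory Defs
  imports Complex_Main "HOL-Library.Multiset"
begin

text \<open>A trie over alphabet Sig is represented by the finite, prefix-closed set of its
nodes, each node being identified with the string of edge labels on the path from the root
(the root is the empty list). Sibling order is induced by the order on the alphabet and plays
no role in the entropies.\<close>

definition is_trie :: "'a::linorder set \<Rightarrow> 'a list set \<Rightarrow> bool" where
  "is_trie Sig T \<longleftrightarrow> finite Sig \<and> finite T \<and> [] \<in> T \<and>
     (\<forall>u\<in>T. butlast u \<in> T) \<and> (\<forall>u\<in>T. set u \<subseteq> Sig)"

text \<open>Incoming label: None plays the role of the special symbol # (root).\<close>
definition lam :: "'a list \<Rightarrow> 'a option" where
  "lam u = (if u = [] then None else Some (last u))"

text \<open>Parent: butlast (the parent of the root is the root). Length-k context lambda_k.\<close>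
fun ctx :: "nat \<Rightarrow> 'a list \<Rightarrow> 'a option list" where
  "ctx 0 u = []"
| "ctx (Suc k) u = ctx k (butlast u) @ [lam u]"

definition out :: "'a list set \<Rightarrow> 'a list \<Rightarrow> 'a set" where
  "out T u = {c. u @ [c] \<in> T}"

definition n_w :: "'a list set \<Rightarrow> nat \<Rightarrow> 'a option list \<Rightarrow> nat" where
  "n_w T k w = card {u \<in> T. ctx k u = w}"

definition n_wc :: "'a list set \<Rightarrow> nat \<Rightarrow> 'a option list \<Rightarrow> 'a \<Rightarrow> nat" where
  "n_wc T k w c = card {u \<in> T. ctx k u = w \<and> c \<in> out T u}"

definition xlog :: "real \<Rightarrow> real \<Rightarrow> real" where
  "xlog x y = (if x = 0 then 0 else x * log 2 (y / x))"

definition Hk :: "'a set \<Rightarrow> 'a list set \<Rightarrow> nat \<Rightarrow> real" where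
  "Hk Sig T k = (\<Sum>w\<in>ctx k ` T. \<Sum>c\<in>Sig.
      xlog (n_wc T k w c / card T) (n_w T k w / card T)
    + xlog ((real (n_w T k w) - n_wc T k w c) / card T) (n_w T k w / card T))"

text \<open>Empirical zeroth-order entropy of a string, given as the multiset of its letters.\<close>
definition H0 :: "'a multiset \<Rightarrow> real" where
  "H0 X = (if size X = 0 then 0 else
     (\<Sum>c\<in>set_mset X. (count X c / size X) * log 2 (size X / count X c)))"

text \<open>cover(w): the labels of all edges leaving nodes with context w (order irrelevant).\<close>
definition cover :: "'a list set \<Rightarrow> nat \<Rightarrow> 'a option list \<Rightarrow> 'a multiset" where
  "cover T k w = (\<Sum>u\<in>{u \<in> T. ctx k u = w}. mset_set (out T u))"

text \<open>(n-1) * H^label_k(T), as defined in the paper.\<close>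
definition nm1_Hlabel :: "'a list set \<Rightarrow> nat \<Rightarrow> real" where
  "nm1_Hlabel T k = (\<Sum>w\<in>ctx k ` T. real (size (cover T k w)) * H0 (cover T k w))"

end

theory Submission
  imports Defs "HOL-Analysis.Harmonic_Numbers"
begin

text \<open>Group the nodes by their context w and let X = cover(w), so that n_wc is the multiplicity
of c in X and N = n_w bounds every multiplicity. The term of w in n H_k(T) is the sum over c of
the binary entropies xlog(n_wc, N) + xlog(N - n_wc, N). The first parts add up to
|X| H_0(X) + |X| log(N/|X|), and |X| log(N/|X|) \<le> (N - |X|)/ln 2; the second parts are at most
n_wc/ln 2 each, hence |X|/ln 2 in total. Both estimates are ln x \<le> x - 1. So the term of w
exceeds |X| H_0(X) by at most N/ln 2, and summing over w gives n/ln 2 < 1.443 n.\<close>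

lemma mult_xlog_divide:
  assumes "(n::real) > 0"
  shows "n * xlog (a / n) (b / n) = xlog a b"
  using assms unfolding xlog_def by auto

lemma xlog_le_diff:
  assumes "0 \<le> x" "0 < y"
  shows "xlog x y \<le> (y - x) / ln 2"
proof (cases "x = 0")
  case True
  then show ?thesis using assms by (simp add: xlog_def)
next
  case False
  with assms have "x > 0" by simp
  have "ln (y / x) \<le> y / x - 1"
    using \<open>x > 0\<close> assms by (intro ln_le_minus_one) simp
  then have "x * ln (y / x) \<le> x * (y / x - 1)"
    using \<open>x > 0\<close> by (simp add: mult_left_mono)
  also have "\<dots> = y - x" using \<open>x > 0\<close> by (simp add: field_simps)
  finally show ?thesis
    using False unfolding xlog_def log_def by (simp add: divide_right_mono)
qed

lemma xlog_change_base:
  assumes "0 \<le> a" "0 < L" "0 < N"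
  shows "xlog a N = xlog a L + a * log 2 (N / L)"
proof (cases "a = 0")
  case False
  with assms have "log 2 (N / a) = log 2 (L / a) + log 2 (N / L)"
    by (simp add: log_divide)
  with False show ?thesis by (simp add: xlog_def algebra_simps)
qed (simp add: xlog_def)

lemma size_eq_sum_count:
  assumes "finite A" "set_mset X \<subseteq> A"
  shows "size X = (\<Sum>c\<in>A. count X c)"
  unfolding size_multiset_overloaded_eq
  using assms by (intro sum.mono_neutral_left) (auto simp: not_in_iff)

lemma size_mult_H0:
  assumes "finite A" "set_mset X \<subseteq> A"
  shows "real (size X) * H0 X = (\<Sum>c\<in>A. xlog (count X c) (size X))"
proof (cases "size X = 0")
  case True
  then show ?thesis by (simp add: H0_def xlog_def)
next
  case False
  then have "real (size X) * H0 X = (\<Sum>c\<in>set_mset X. xlog (count X c) (size X))"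
    unfolding H0_def xlog_def by (auto simp: sum_distrib_left intro!: sum.cong)
  also have "\<dots> = (\<Sum>c\<in>A. xlog (count X c) (size X))"
    using assms by (intro sum.mono_neutral_left) (auto simp: xlog_def)
  finally show ?thesis .
qed

lemma sum_xlog_count_le:
  assumes "finite A" "set_mset X \<subseteq> A" "0 < N"
  shows "(\<Sum>c\<in>A. xlog (count X c) N) \<le> real (size X) * H0 X + (N - size X) / ln 2"
proof (cases "size X = 0")
  case True
  then show ?thesis using assms by (simp add: xlog_def)
next
  case False
  define L where "L = real (size X)"
  have "L > 0" using False by (simp add: L_def nonempty_has_size)
  have "(\<Sum>c\<in>A. xlog (count X c) N)
      = (\<Sum>c\<in>A. xlog (count X c) L + count X c * log 2 (N / L))"
    using \<open>L > 0\<close> assms by (intro sum.cong refl xlog_change_base) auto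
  also have "\<dots> = (\<Sum>c\<in>A. xlog (count X c) L) + L * log 2 (N / L)"
    using assms unfolding sum.distrib sum_distrib_right[symmetric]
    by (simp add: L_def size_eq_sum_count)
  also have "(\<Sum>c\<in>A. xlog (count X c) L) = real (size X) * H0 X"
    using assms by (simp add: L_def size_mult_H0)
  also have "L * log 2 (N / L) \<le> (N - L) / ln 2"
    using xlog_le_diff[of L N] \<open>L > 0\<close> assms(3) by (simp add: xlog_def)
  finally show ?thesis by (simp add: L_def)
qed

lemma sum_xlog_complement_count_le:
  assumes "finite A" "set_mset X \<subseteq> A" "0 < N" "\<And>c. real (count X c) \<le> N"
  shows "(\<Sum>c\<in>A. xlog (N - count X c) N) \<le> real (size X) / ln 2"
proof -
  have "(\<Sum>c\<in>A. xlog (N - count X c) N) \<le> (\<Sum>c\<in>A. real (count X c) / ln 2)"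
    using assms(3,4) by (intro sum_mono order.trans[OF xlog_le_diff]) auto
  also have "\<dots> = real (size X) / ln 2"
    using assms(1,2) by (simp add: size_eq_sum_count sum_divide_distrib)
  finally show ?thesis .
qed

lemma sum_binary_xlog_count_le:
  assumes "finite A" "set_mset X \<subseteq> A" "0 < N" "\<And>c. real (count X c) \<le> N"
  shows "(\<Sum>c\<in>A. xlog (count X c) N + xlog (N - count X c) N)
     \<le> real (size X) * H0 X + N / ln 2"
  using sum_xlog_count_le[OF assms(1-3)] sum_xlog_complement_count_le[OF assms]
  by (simp add: sum.distrib diff_divide_distrib)

lemma finite_out: "finite T \<Longrightarrow> finite (out T u)"
proof -
  assume "finite T"
  moreover have "out T u = (\<lambda>c. u @ [c]) -` T" by (auto simp: out_def)
  ultimately show ?thesis by (simp add: finite_vimageI inj_def)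
qed

lemma count_cover:
  assumes "finite T"
  shows "count (cover T k w) c = n_wc T k w c"
proof -
  have "count (cover T k w) c = (\<Sum>u\<in>{u \<in> T. ctx k u = w}. if c \<in> out T u then 1 else 0)"
    unfolding cover_def using assms
    by (auto simp: count_sum finite_out count_mset_set intro!: sum.cong)
  also have "\<dots> = n_wc T k w c"
    using assms unfolding n_wc_def by (simp add: sum.If_cases Int_def conj_assoc)
  finally show ?thesis .
qed

lemma set_mset_cover_subset:
  assumes "finite T" "\<And>u. u \<in> T \<Longrightarrow> set u \<subseteq> Sig"
  shows "set_mset (cover T k w) \<subseteq> Sig"
proof -
  have "out T u \<subseteq> Sig" for u
    using assms(2) unfolding out_def by fastforce
  then show ?thesis
    using assms(1) by (auto simp: cover_def set_mset_sum finite_out)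
qed

lemma n_wc_le_n_w: "finite T \<Longrightarrow> n_wc T k w c \<le> n_w T k w"
  unfolding n_wc_def n_w_def by (intro card_mono) auto

lemma n_w_pos: "finite T \<Longrightarrow> w \<in> ctx k ` T \<Longrightarrow> 0 < n_w T k w"
  unfolding n_w_def by (auto simp: card_gt_0_iff)

lemma sum_n_w: "finite T \<Longrightarrow> (\<Sum>w\<in>ctx k ` T. n_w T k w) = card T"
  unfolding n_w_def using sum.image_gen[of T "\<lambda>_. 1::nat" "ctx k"] by (simp flip: card_eq_sum)

lemma card_mult_Hk_le:
  assumes "is_trie Sig T"
  shows "real (card T) * Hk Sig T k \<le> nm1_Hlabel T k + real (card T) / ln 2"
proof -
  have "finite Sig" "finite T" and sig: "\<And>u. u \<in> T \<Longrightarrow> set u \<subseteq> Sig"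
    using assms unfolding is_trie_def by auto
  have "card T > 0" using assms \<open>finite T\<close> unfolding is_trie_def by (auto simp: card_gt_0_iff)
  let ?W = "ctx k ` T" and ?X = "cover T k" and ?N = "\<lambda>w. real (n_w T k w)"
  have "real (card T) * Hk Sig T k = (\<Sum>w\<in>?W. \<Sum>c\<in>Sig.
      xlog (count (?X w) c) (?N w) + xlog (?N w - count (?X w) c) (?N w))"
    using \<open>card T > 0\<close> \<open>finite T\<close> unfolding Hk_def
    by (simp add: sum_distrib_left distrib_left mult_xlog_divide count_cover
        diff_divide_distrib[symmetric])
  also have "\<dots> \<le> (\<Sum>w\<in>?W. real (size (?X w)) * H0 (?X w) + ?N w / ln 2)"
    using \<open>finite Sig\<close> \<open>finite T\<close> set_mset_cover_subset[OF \<open>finite T\<close> sig]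
    by (intro sum_mono sum_binary_xlog_count_le) (auto simp: n_w_pos count_cover n_wc_le_n_w)
  also have "\<dots> = nm1_Hlabel T k + real (card T) / ln 2"
    using \<open>finite T\<close> unfolding nm1_Hlabel_def
    by (simp add: sum.distrib sum_divide_distrib[symmetric] sum_n_w flip: of_nat_sum)
  finally show ?thesis .
qed

lemma inverse_ln2_le: "1 / ln 2 \<le> (1.443 :: real)"
proof -
  \<comment> \<open>three terms of ln 2 = 2 (y + y^3/3 + y^5/5 + ...) with y = 1/3\<close>
  have "842 / 1215 \<le> ln (2 :: real)"
    using ln_approx_bounds[of 2 3] by (simp add: eval_nat_numeral)
  then show ?thesis by (simp add: divide_le_eq)
qed

theorem corollary3:
  fixes Sig :: "'a::linorder set" and T :: "'a list set" and k :: nat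
  assumes "is_trie Sig T"
  shows "real (card T) * Hk Sig T k \<le> nm1_Hlabel T k + 1.443 * real (card T)"
proof -
  have "real (card T) / ln 2 \<le> 1.443 * real (card T)"
    using mult_right_mono[OF inverse_ln2_le, of "real (card T)"] by simp
  then show ?thesis using card_mult_Hk_le[OF assms, of k] by linarith
qed

end
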